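(* Let $X,E$ be as in Situation 1 or Situation 2 (see context), with $A$ the corresponding scalar algebra, and suppose $Z(E)$ is one-dimensional. Then for every $T\in Z(A(X,E))$ there exists $h\in A$ such that $T=M_h$, i.e. $Tf=hf$ for all $f\in A(X,E)$.
   Context: $\mathbb K=\mathbb R$ or $\mathbb C$; $E$ is a $\mathbb K$-Banach space. Situation 1: $X$ realcompact completely regular, $E$ infinite-dimensional, $A(X,E)=C_b(X,E)$ (bounded continuous $E$-valued functions) and $A=C_b(X,\mathbb K)$. Situation 2: $X$ complete metric space, $A(X,E)=C_b^u(X,E)$ (bounded uniformly continuous) and $A=C_b^u(X,\mathbb K)$. These spaces carry the sup norm. For a Banach space $B$, ${\rm Ext}_B$ is the set of extreme points of the closed unit ball of the dual $B'$. A continuous linear $T:B\to B$ is a multiplier if there is $a_T:{\rm Ext}_B\to\mathbb K$ with $p\circ T=a_T(p)p$ for all $p\in{\rm Ext}_B$. For multipliers $T,S$, $S$ is an adjoint of $T$ if $a_S=\overline{a_T}$. The centralizer $Z(B)$ is the set of multipliers of $B$ that have an adjoint. $M_h(f)=hf$. $Z(E)$ one-dimensional means $Z(E)=\mathbb K\,\mathrm{Id}_E$. *)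

theory Defs
  imports "HOL-Analysis.Analysis" "HOL-Library.Function_Algebras"
begin

text \<open>A space is realcompact if it is homeomorphic to a closed subspace of a power of the reals.
  The index set is taken as a set of real-valued functions on the space.\<close>
definition realcompact :: "'x topology \<Rightarrow> bool" where
  "realcompact X \<longleftrightarrow>
     (\<exists>(J :: ('x \<Rightarrow> real) set) (e :: 'x \<Rightarrow> (('x \<Rightarrow> real) \<Rightarrow> real)).
        embedding_map X (powertop_real J) e \<and>
        closedin (powertop_real J) (e ` topspace X))"

definition dual_ball ::
  "'v::ab_group_add set \<Rightarrow> ('v \<Rightarrow> real) \<Rightarrow> ('k::real_normed_field \<Rightarrow> 'v \<Rightarrow> 'v) \<Rightarrow> ('v \<Rightarrow> 'k) set" where
  "dual_ball S nm sm = {p.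
      (\<forall>v\<in>S. \<forall>w\<in>S. p (v + w) = p v + p w) \<and>
      (\<forall>c. \<forall>v\<in>S. p (sm c v) = c * p v) \<and>
      (\<forall>v\<in>S. norm (p v) \<le> nm v) \<and>
      (\<forall>v. v \<notin> S \<longrightarrow> p v = 0)}"

definition Ext ::
  "'v::ab_group_add set \<Rightarrow> ('v \<Rightarrow> real) \<Rightarrow> ('k::real_normed_field \<Rightarrow> 'v \<Rightarrow> 'v) \<Rightarrow> ('v \<Rightarrow> 'k) set" where
  "Ext S nm sm = {p \<in> dual_ball S nm sm.
      \<forall>q r (t::real). q \<in> dual_ball S nm sm \<and> r \<in> dual_ball S nm sm \<and> 0 < t \<and> t < 1 \<and>
        p = (\<lambda>v. of_real t * q v + of_real (1 - t) * r v) \<longrightarrow> q = r}"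

definition bounded_op ::
  "'v::ab_group_add set \<Rightarrow> ('v \<Rightarrow> real) \<Rightarrow> ('k \<Rightarrow> 'v \<Rightarrow> 'v) \<Rightarrow> ('v \<Rightarrow> 'v) \<Rightarrow> bool" where
  "bounded_op S nm sm T \<longleftrightarrow>
      (\<forall>v\<in>S. T v \<in> S) \<and>
      (\<forall>v\<in>S. \<forall>w\<in>S. T (v + w) = T v + T w) \<and>
      (\<forall>c. \<forall>v\<in>S. T (sm c v) = sm c (T v)) \<and>
      (\<exists>C. \<forall>v\<in>S. nm (T v) \<le> C * nm v)"

definition multiplier_with ::
  "'v::ab_group_add set \<Rightarrow> ('v \<Rightarrow> real) \<Rightarrow> ('k::real_normed_field \<Rightarrow> 'v \<Rightarrow> 'v) \<Rightarrow>
     ('v \<Rightarrow> 'v) \<Rightarrow> (('v \<Rightarrow> 'k) \<Rightarrow> 'k) \<Rightarrow> bool" where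
  "multiplier_with S nm sm T a \<longleftrightarrow>
      bounded_op S nm sm T \<and> (\<forall>p\<in>Ext S nm sm. \<forall>v\<in>S. p (T v) = a p * p v)"

text \<open>Centralizer Z(B): multipliers T having an adjoint multiplier U, i.e. a_U = conj o a_T
  (cj is the conjugation of the scalar field: id for R, cnj for C).\<close>
definition centralizer ::
  "'v::ab_group_add set \<Rightarrow> ('v \<Rightarrow> real) \<Rightarrow> ('k::real_normed_field \<Rightarrow> 'v \<Rightarrow> 'v) \<Rightarrow> ('k \<Rightarrow> 'k) \<Rightarrow>
     ('v \<Rightarrow> 'v) set" where
  "centralizer S nm sm cj = {T. \<exists>U a.
      multiplier_with S nm sm T a \<and> multiplier_with S nm sm U (\<lambda>p. cj (a p))}"

definition Z_one_dim :: "('k::real_normed_field \<Rightarrow> 'e::real_normed_vector \<Rightarrow> 'e) \<Rightarrow> ('k \<Rightarrow> 'k) \<Rightarrow> bool" where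
  "Z_one_dim sm cj \<longleftrightarrow> centralizer (UNIV::'e set) norm sm cj = {T. \<exists>c. T = sm c}"

definition infinite_dim_K :: "('k \<Rightarrow> 'e::ab_group_add \<Rightarrow> 'e) \<Rightarrow> bool" where
  "infinite_dim_K sm \<longleftrightarrow>
     \<not> (\<exists>F::'e set. finite F \<and> (\<forall>x. \<exists>c. x = (\<Sum>v\<in>F. sm (c v) v)))"

text \<open>A complex scalar multiplication turning the real Banach space 'e into a complex Banach
  space (compatible with the real structure and the norm).\<close>
definition complex_scaling :: "(complex \<Rightarrow> 'e::real_normed_vector \<Rightarrow> 'e) \<Rightarrow> bool" where
  "complex_scaling sm \<longleftrightarrow>
     (\<forall>a b x. sm (a + b) x = sm a x + sm b x) \<and>
     (\<forall>a x y. sm a (x + y) = sm a x + sm a y) \<and>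
     (\<forall>a b x. sm (a * b) x = sm a (sm b x)) \<and>
     (\<forall>x. sm 1 x = x) \<and>
     (\<forall>a x. norm (sm a x) = cmod a * norm x) \<and>
     (\<forall>r x. sm (complex_of_real r) x = r *\<^sub>R x)"

definition Cb :: "('x::topological_space \<Rightarrow> 'e::real_normed_vector) set" where
  "Cb = {f. continuous_on UNIV f \<and> bounded (range f)}"

definition Cbu :: "('x::metric_space \<Rightarrow> 'e::real_normed_vector) set" where
  "Cbu = {f. uniformly_continuous_on UNIV f \<and> bounded (range f)}"

definition supnorm :: "('x \<Rightarrow> 'e::real_normed_vector) \<Rightarrow> real" where
  "supnorm f = (SUP x. norm (f x))"

definition fsm :: "('k \<Rightarrow> 'e \<Rightarrow> 'e) \<Rightarrow> 'k \<Rightarrow> ('x \<Rightarrow> 'e) \<Rightarrow> ('x \<Rightarrow> 'e)" where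
  "fsm sm c f = (\<lambda>x. sm c (f x))"

end

theory Submission
  imports Defs
begin

text \<open>Fix \<open>x\<close> and an extreme point \<open>q\<close> of the dual unit ball of \<open>E\<close>. The functional
  \<open>f \<mapsto> q (f x)\<close> is an extreme point of the dual unit ball of \<open>A(X,E)\<close>: if it splits as
  \<open>t \<phi> + (1 - t) \<psi>\<close>, then cutting \<open>f\<close> off by functions of \<open>\<parallel>f\<parallel>\<close> itself shows that
  \<open>\<phi>\<close> and \<open>\<psi>\<close> only see \<open>f x\<close>, and on constants they split \<open>q\<close>. Consequently a multiplier
  \<open>T\<close> of \<open>A(X,E)\<close> slices to the multiplier \<open>e \<mapsto> T (const e) x\<close> of \<open>E\<close>, adjoints slice to
  adjoints, and \<open>Z(E) = K Id\<close> gives \<open>T (const e) x = h x \<cdot> e\<close>. Extreme functionals separate the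
  points of \<open>E\<close> (Zorn on closed faces of the weak* compact dual ball), so \<open>T f x = 0\<close>
  whenever \<open>f x = 0\<close>, whence \<open>T f x = h x \<cdot> f x\<close>. Finally \<open>h\<close> is a bounded linear
  coordinate functional applied to \<open>T (const e\<^sub>0)\<close>, so it lies in \<open>A\<close>. The norming
  functionals needed along the way come from Hahn--Banach, proved via Koenig's minimal
  sublinear functionals.\<close>

lemma Zorn_minimal:
  fixes A :: "'a::order set"
  assumes "A \<noteq> {}"
    and lower: "\<And>C. C \<subseteq> A \<Longrightarrow> C \<noteq> {} \<Longrightarrow> (\<forall>a\<in>C. \<forall>b\<in>C. a \<le> b \<or> b \<le> a) \<Longrightarrow> \<exists>l\<in>A. \<forall>a\<in>C. l \<le> a"
  shows "\<exists>m\<in>A. \<forall>a\<in>A. a \<le> m \<longrightarrow> a = m"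
proof -
  have "partial_order_on A (relation_of (\<lambda>a b. b \<le> a) A)"
    by (rule partial_order_on_relation_ofI) auto
  moreover have "\<exists>l\<in>A. \<forall>a\<in>C. l \<le> a" if "C \<in> Chains (relation_of (\<lambda>a b. b \<le> a) A)" for C
  proof (cases "C = {}")
    case True
    then show ?thesis using \<open>A \<noteq> {}\<close> by blast
  next
    case False
    with that show ?thesis
      by (intro lower) (auto simp: Chains_def relation_of_def)
  qed
  ultimately show ?thesis
    using predicate_Zorn[of A "\<lambda>a b. b \<le> a"] by blast
qed

lemma exists_unit_mult_eq_norm:
  fixes z :: "'k::real_normed_field"
  shows "\<exists>l. norm l = 1 \<and> l * z = of_real (norm z)"
proof (cases "z = 0")
  case True
  then show ?thesis by (intro exI[of _ 1]) auto
next
  case False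
  then show ?thesis by (intro exI[of _ "of_real (norm z) / z"]) (simp add: norm_divide)
qed

lemma compact_chain_Inter_nonempty:
  assumes "compact K" "C \<noteq> {}" and sets: "\<And>G. G \<in> C \<Longrightarrow> closed G \<and> G \<noteq> {} \<and> G \<subseteq> K"
    and chain: "\<forall>G\<in>C. \<forall>H\<in>C. G \<subseteq> H \<or> H \<subseteq> G"
  shows "\<Inter>C \<noteq> {}"
proof -
  have "K \<inter> \<Inter>C \<noteq> {}"
  proof (rule compact_imp_fip[OF \<open>compact K\<close>])
    show "closed G" if "G \<in> C" for G using sets[OF that] by blast
    fix F assume F: "finite F" "F \<subseteq> C"
    show "K \<inter> \<Inter>F \<noteq> {}"
    proof (cases "F = {}")
      case True
      then show ?thesis using sets \<open>C \<noteq> {}\<close> by blast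
    next
      case False
      have "subset.chain C F" using F chain unfolding subset_chain_def by blast
      then have "\<Inter>F \<in> C" using Inter_in_chain[OF F(1) False] F(2) by blast
      then show ?thesis using sets by blast
    qed
  qed
  then show ?thesis by blast
qed

section \<open>Hahn--Banach for the norm\<close>

definition sublinear :: "('a::real_vector \<Rightarrow> real) \<Rightarrow> bool" where
  "sublinear q \<longleftrightarrow> (\<forall>x y. q (x + y) \<le> q x + q y) \<and> (\<forall>c x. 0 \<le> c \<longrightarrow> q (c *\<^sub>R x) \<le> c * q x)"

lemma sublinear_add: "sublinear q \<Longrightarrow> q (x + y) \<le> q x + q y"
  unfolding sublinear_def by blast

lemma sublinear_scaleR_le: "sublinear q \<Longrightarrow> 0 \<le> c \<Longrightarrow> q (c *\<^sub>R x) \<le> c * q x"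
  unfolding sublinear_def by blast

lemma sublinear_zero:
  assumes "sublinear q" shows "q 0 = 0"
proof -
  have "q (0 *\<^sub>R 0) \<le> 0 * q 0" and "q (0 + 0) \<le> q 0 + q 0"
    using assms unfolding sublinear_def by blast+
  then show ?thesis by simp
qed

lemma sublinear_scaleR:
  assumes "sublinear q" "0 \<le> c" shows "q (c *\<^sub>R x) = c * q x"
proof (cases "c = 0")
  case True
  then show ?thesis using sublinear_zero[OF assms(1)] by simp
next
  case False
  have "q x = q (inverse c *\<^sub>R (c *\<^sub>R x))" using False by simp
  also have "\<dots> \<le> inverse c * q (c *\<^sub>R x)" using assms by (intro sublinear_scaleR_le) auto
  finally have "c * q x \<le> q (c *\<^sub>R x)" using False assms(2) by (simp add: field_simps)
  then show ?thesis using sublinear_scaleR_le[OF assms] by (simp add: order.antisym)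
qed

lemma sublinear_neg_le:
  assumes "sublinear q" shows "- q (- x) \<le> q x"
  using sublinear_add[OF assms, of x "- x"] sublinear_zero[OF assms] by simp

text \<open>Koenig's trick: a sublinear functional that cannot be decreased by this shift is linear.\<close>
definition sublinear_shift :: "('a::real_vector \<Rightarrow> real) \<Rightarrow> 'a \<Rightarrow> 'a \<Rightarrow> real" where
  "sublinear_shift q y x = (INF t\<in>{0..}. q (x + t *\<^sub>R y) - t * q y)"

lemma sublinear_shift_le:
  assumes "sublinear q" "0 \<le> t"
  shows "sublinear_shift q y x \<le> q (x + t *\<^sub>R y) - t * q y"
  unfolding sublinear_shift_def
proof (rule cINF_lower)
  have "- q (- x) \<le> q (x + s *\<^sub>R y) - s * q y" if "0 \<le> s" for s
    using sublinear_add[OF assms(1), of "x + s *\<^sub>R y" "- x"] sublinear_scaleR[OF assms(1) that, of y]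
    by simp
  then show "bdd_below ((\<lambda>t. q (x + t *\<^sub>R y) - t * q y) ` {0..})"
    by (intro bdd_belowI2) auto
qed (use assms in simp)

lemma sublinear_shift_greatest:
  "(\<And>t. 0 \<le> t \<Longrightarrow> m \<le> q (x + t *\<^sub>R y) - t * q y) \<Longrightarrow> m \<le> sublinear_shift q y x"
  unfolding sublinear_shift_def by (rule cINF_greatest) auto

lemma sublinear_shift_le_self: "sublinear q \<Longrightarrow> sublinear_shift q y x \<le> q x"
  using sublinear_shift_le[of q 0] by simp

lemma sublinear_shift_add:
  assumes q: "sublinear q"
  shows "sublinear_shift q y (x1 + x2) \<le> sublinear_shift q y x1 + sublinear_shift q y x2"
proof -
  let ?s = "sublinear_shift q y"
  have split: "?s (x1 + x2) \<le> (q (x1 + t1 *\<^sub>R y) - t1 * q y) + (q (x2 + t2 *\<^sub>R y) - t2 * q y)"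
    if "0 \<le> t1" "0 \<le> t2" for t1 t2
  proof -
    have "?s (x1 + x2) \<le> q ((x1 + t1 *\<^sub>R y) + (x2 + t2 *\<^sub>R y)) - (t1 + t2) * q y"
      using sublinear_shift_le[OF q, of "t1 + t2" y "x1 + x2"] that by (simp add: algebra_simps)
    also have "\<dots> \<le> q (x1 + t1 *\<^sub>R y) + q (x2 + t2 *\<^sub>R y) - (t1 + t2) * q y"
      using sublinear_add[OF q] by simp
    finally show ?thesis by (simp add: algebra_simps)
  qed
  have "?s (x1 + x2) - (q (x1 + t1 *\<^sub>R y) - t1 * q y) \<le> ?s x2" if "0 \<le> t1" for t1
  proof (rule sublinear_shift_greatest)
    fix t2 :: real assume "0 \<le> t2"
    with split[OF that this] show "?s (x1 + x2) - (q (x1 + t1 *\<^sub>R y) - t1 * q y) \<le> q (x2 + t2 *\<^sub>R y) - t2 * q y"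
      by linarith
  qed
  then have "?s (x1 + x2) - ?s x2 \<le> ?s x1"
    by (intro sublinear_shift_greatest) (simp add: algebra_simps)
  then show ?thesis by linarith
qed

lemma sublinear_shift_scaleR_le:
  assumes q: "sublinear q" and c: "0 \<le> c"
  shows "sublinear_shift q y (c *\<^sub>R x) \<le> c * sublinear_shift q y x"
proof (cases "c = 0")
  case True
  then show ?thesis using sublinear_shift_le[OF q, of 0 y 0] sublinear_zero[OF q] by simp
next
  case False
  let ?s = "sublinear_shift q y"
  have "?s (c *\<^sub>R x) / c \<le> ?s x"
  proof (rule sublinear_shift_greatest)
    fix t :: real assume "0 \<le> t"
    have "?s (c *\<^sub>R x) \<le> q (c *\<^sub>R (x + t *\<^sub>R y)) - (c * t) * q y"
      using sublinear_shift_le[OF q, of "c * t" y "c *\<^sub>R x"] c \<open>0 \<le> t\<close> by (simp add: algebra_simps)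
    also have "\<dots> = c * (q (x + t *\<^sub>R y) - t * q y)"
      using sublinear_scaleR[OF q c, of "x + t *\<^sub>R y"] by (simp add: algebra_simps)
    finally show "?s (c *\<^sub>R x) / c \<le> q (x + t *\<^sub>R y) - t * q y"
      using c False by (simp add: field_simps)
  qed
  then show ?thesis using c False by (simp add: field_simps)
qed

lemma sublinear_sublinear_shift: "sublinear q \<Longrightarrow> sublinear (sublinear_shift q y)"
  unfolding sublinear_def[of "sublinear_shift q y"] using sublinear_shift_add sublinear_shift_scaleR_le by blast

lemma minimal_sublinear_imp_linear:
  assumes q: "sublinear q" and minimal: "\<And>r. sublinear r \<Longrightarrow> r \<le> q \<Longrightarrow> r = q"
  shows "linear q"
proof -
  have neg: "q (- y) = - q y" for y
  proof -
    have "sublinear_shift q y = q"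
      using minimal[OF sublinear_sublinear_shift[OF q]] sublinear_shift_le_self[OF q] by (simp add: le_fun_def)
    then have "q (- y) \<le> - q y"
      using sublinear_shift_le[OF q, of 1 y "- y"] sublinear_zero[OF q] by simp
    then show ?thesis using sublinear_neg_le[OF q, of "- y"] by simp
  qed
  show ?thesis
  proof (rule linearI)
    fix x y
    show "q (x + y) = q x + q y"
      using sublinear_add[OF q, of "x + y" "- y"] sublinear_add[OF q, of x y] neg[of y] by simp
  next
    fix c :: real and x
    show "q (c *\<^sub>R x) = c *\<^sub>R q x"
    proof (cases "0 \<le> c")
      case True
      then show ?thesis using sublinear_scaleR[OF q] by simp
    next
      case False
      then show ?thesis using neg[of "(- c) *\<^sub>R x"] sublinear_scaleR[OF q, of "- c" x] by simp
    qed
  qed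
qed

lemma sublinear_INF_chain:
  assumes "C \<noteq> {}" and sub: "\<And>a. a \<in> C \<Longrightarrow> sublinear a"
    and chain: "\<forall>a\<in>C. \<forall>b\<in>C. a \<le> b \<or> b \<le> a" and bdd: "\<And>x. bdd_below ((\<lambda>a. a x) ` C)"
  shows "sublinear (\<lambda>x. INF a\<in>C. a x)"
  unfolding sublinear_def
proof (intro conjI allI impI)
  let ?u = "\<lambda>x. INF a\<in>C. a x"
  have lower: "?u x \<le> a x" if "a \<in> C" for a x
    using that bdd by (intro cINF_lower)
  have greatest: "m \<le> ?u x" if "\<And>a. a \<in> C \<Longrightarrow> m \<le> a x" for m x
    using that \<open>C \<noteq> {}\<close> by (intro cINF_greatest)
  fix x y
  have "?u (x + y) \<le> a x + b y" if ab: "a \<in> C" "b \<in> C" for a b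
  proof -
    obtain c where "c \<in> C" "c \<le> a" "c \<le> b" using chain ab by (metis order_refl)
    then show ?thesis
      using lower[of c "x + y"] sublinear_add[OF sub, of c x y] le_funD[of c a x] le_funD[of c b y]
      by linarith
  qed
  then have "?u (x + y) - b y \<le> ?u x" if "b \<in> C" for b
    using that by (intro greatest) (simp add: algebra_simps)
  then have "?u (x + y) - ?u x \<le> ?u y"
    by (intro greatest) (simp add: algebra_simps)
  then show "?u (x + y) \<le> ?u x + ?u y" by simp
  fix c :: real assume c: "0 \<le> c"
  show "?u (c *\<^sub>R x) \<le> c * ?u x"
  proof (cases "c = 0")
    case True
    obtain a where "a \<in> C" using \<open>C \<noteq> {}\<close> by blast
    then show ?thesis using True lower[of a 0] sublinear_zero[OF sub[OF \<open>a \<in> C\<close>]] by simp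
  next
    case False
    have "?u (c *\<^sub>R x) / c \<le> ?u x"
      using lower[of _ "c *\<^sub>R x"] sublinear_scaleR[OF sub c] c False
      by (intro greatest) (simp add: field_simps)
    then show ?thesis using c False by (simp add: field_simps)
  qed
qed

lemma linear_below_sublinear:
  assumes "sublinear q0"
  shows "\<exists>\<rho>. linear \<rho> \<and> \<rho> \<le> q0"
proof -
  define A where "A = {q. sublinear q \<and> q \<le> q0}"
  have "\<exists>m\<in>A. \<forall>a\<in>A. a \<le> m \<longrightarrow> a = m"
  proof (rule Zorn_minimal)
    show "A \<noteq> {}" using assms unfolding A_def by blast
    fix C assume C: "C \<subseteq> A" "C \<noteq> {}" "\<forall>a\<in>C. \<forall>b\<in>C. a \<le> b \<or> b \<le> a"
    have "- q0 (- x) \<le> a x" if "a \<in> C" for a x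
    proof -
      have "sublinear a" "a \<le> q0" using that C(1) unfolding A_def by auto
      then show ?thesis using sublinear_neg_le[of a x] le_funD[of a q0 "- x"] by linarith
    qed
    then have bdd: "bdd_below ((\<lambda>a. a x) ` C)" for x
      by (intro bdd_belowI2)
    then have "(\<lambda>x. INF a\<in>C. a x) \<le> a" if "a \<in> C" for a
      using that by (auto simp: le_fun_def intro: cINF_lower)
    moreover have "sublinear (\<lambda>x. INF a\<in>C. a x)"
      using C bdd by (intro sublinear_INF_chain) (auto simp: A_def)
    ultimately show "\<exists>l\<in>A. \<forall>a\<in>C. l \<le> a"
      using C unfolding A_def by (intro bexI[of _ "\<lambda>x. INF a\<in>C. a x"]) (blast intro: order_trans)+
  qed
  then obtain m where m: "sublinear m" "m \<le> q0" and minimal: "\<And>a. a \<in> A \<Longrightarrow> a \<le> m \<Longrightarrow> a = m"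
    unfolding A_def by blast
  have "linear m"
    using m by (intro minimal_sublinear_imp_linear minimal) (auto simp: A_def intro: order_trans)
  with m show ?thesis by blast
qed

lemma norming_functional_real:
  fixes v :: "'a::real_normed_vector"
  shows "\<exists>\<rho>. linear \<rho> \<and> (\<forall>w. \<bar>\<rho> w\<bar> \<le> norm w) \<and> \<rho> v = norm v"
proof -
  have "sublinear (norm :: 'a \<Rightarrow> real)"
    unfolding sublinear_def by (auto intro: norm_triangle_ineq)
  then obtain \<rho> where "linear \<rho>" and below: "\<rho> \<le> sublinear_shift norm v"
    using linear_below_sublinear[OF sublinear_sublinear_shift] by blast
  have le_norm: "\<rho> w \<le> norm w" for w
    using le_funD[OF below, of w] sublinear_shift_le_self[OF \<open>sublinear norm\<close>, of v w] by linarith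
  have "\<rho> (- v) \<le> - norm v"
    using le_funD[OF below, of "- v"] sublinear_shift_le[OF \<open>sublinear norm\<close>, of 1 v "- v"] by simp
  moreover have "\<bar>\<rho> w\<bar> \<le> norm w" for w
    using le_norm[of w] le_norm[of "- w"] linear_neg[OF \<open>linear \<rho>\<close>, of w] by simp
  ultimately show ?thesis
    using \<open>linear \<rho>\<close> le_norm[of v] linear_neg[OF \<open>linear \<rho>\<close>, of v] by (intro exI[of _ \<rho>]) simp
qed

section \<open>Extreme points of the dual unit ball\<close>

text \<open>The scalar field \<open>K\<close> is \<^typ>\<open>real\<close> with \<open>re = id\<close> or \<^typ>\<open>complex\<close> with \<open>re = Re\<close>.\<close>
locale scalar_field =
  fixes re :: "'k::{real_normed_field,heine_borel} \<Rightarrow> real"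
  assumes re_add: "re (a + b) = re a + re b"
    and re_of_real_mult: "re (of_real r * a) = r * re a"
    and re_of_real: "re (of_real r) = r"
    and re_le_norm: "re a \<le> norm a"
begin

lemma re_diff: "re (a - b) = re a - re b"
  using re_add[of "a - b" b] by simp

lemma re_zero: "re 0 = 0"
  using re_of_real[of 0] by simp

lemma re_convex_combination: "re (of_real t * a + of_real (1 - t) * b) = t * re a + (1 - t) * re b"
  by (simp only: re_add re_of_real_mult)

lemma bounded_linear_re: "bounded_linear re"
proof (rule bounded_linear_intro[where K = 1])
  show "re (r *\<^sub>R a) = r *\<^sub>R re a" for r a
    by (simp add: scaleR_conv_of_real re_of_real_mult)
  show "norm (re a) \<le> norm a * 1" for a
    using re_le_norm[of a] re_le_norm[of "- a"] re_diff[of 0 a] re_zero by auto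
qed (rule re_add)

end

text \<open>The existence of norming
  functionals (Hahn--Banach over \<open>K\<close>) is part of the structure; it is proved below for both fields.\<close>
locale normed_space_over = scalar_field re for re :: "'k::{real_normed_field,heine_borel} \<Rightarrow> real" +
  fixes sm :: "'k \<Rightarrow> 'e::real_normed_vector \<Rightarrow> 'e"
  assumes sm_add_right: "sm a (x + y) = sm a x + sm a y"
    and sm_mult: "sm (a * b) x = sm a (sm b x)"
    and norm_sm: "norm (sm a x) = norm a * norm x"
    and sm_of_real: "sm (of_real r) x = r *\<^sub>R x"
    and norming: "\<exists>p \<in> dual_ball UNIV norm sm. p v = of_real (norm v)"
begin

abbreviation "BE \<equiv> dual_ball (UNIV :: 'e set) norm sm"
abbreviation "ExtE \<equiv> Ext (UNIV :: 'e set) norm sm"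

lemma BE_iff:
  "p \<in> BE \<longleftrightarrow> (\<forall>v w. p (v + w) = p v + p w) \<and> (\<forall>c v. p (sm c v) = c * p v) \<and> (\<forall>v. norm (p v) \<le> norm v)"
  by (simp add: dual_ball_def)

lemma BE_add: "p \<in> BE \<Longrightarrow> p (v + w) = p v + p w"
  and BE_sm: "p \<in> BE \<Longrightarrow> p (sm c v) = c * p v"
  and BE_norm: "p \<in> BE \<Longrightarrow> norm (p v) \<le> norm v"
  by (simp_all add: BE_iff)

lemma BE_zero: "p \<in> BE \<Longrightarrow> p 0 = 0"
  using BE_add[of p 0 0] by simp

lemma ExtE_BE: "q \<in> ExtE \<Longrightarrow> q \<in> BE"
  unfolding Ext_def by blast

lemma ExtE_D:
  "q \<in> ExtE \<Longrightarrow> q1 \<in> BE \<Longrightarrow> q2 \<in> BE \<Longrightarrow> 0 < t \<Longrightarrow> t < 1 \<Longrightarrow>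
    q = (\<lambda>v. of_real t * q1 v + of_real (1 - t) * q2 v) \<Longrightarrow> q1 = q2"
  unfolding Ext_def by blast

lemma sm_minus_one: "sm (- 1) x = - x"
  using sm_of_real[of "- 1" x] by simp

lemma bounded_linear_BE:
  assumes "p \<in> BE" shows "bounded_linear p"
proof (rule bounded_linear_intro[where K = 1])
  show "p (r *\<^sub>R v) = r *\<^sub>R p v" for r v
    using BE_sm[OF assms, of "of_real r" v] by (simp add: sm_of_real scaleR_conv_of_real)
qed (use BE_add[OF assms] BE_norm[OF assms] in auto)

lemma BE_eqI:
  assumes "p \<in> BE" "p' \<in> BE" and re_eq: "\<And>w. re (p w) = re (p' w)"
  shows "p = p'"
proof
  fix w
  obtain l where l: "norm l = 1" "l * (p w - p' w) = of_real (norm (p w - p' w))"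
    using exists_unit_mult_eq_norm by blast
  have "of_real (norm (p w - p' w)) = p (sm l w) - p' (sm l w)"
    using l(2) BE_sm[OF assms(1)] BE_sm[OF assms(2)] by (simp add: right_diff_distrib)
  then have "re (of_real (norm (p w - p' w))) = re (p (sm l w) - p' (sm l w))"
    by simp
  then have "norm (p w - p' w) = re (p (sm l w)) - re (p' (sm l w))"
    by (simp only: re_diff re_of_real)
  then show "p w = p' w" using re_eq by simp
qed

definition face :: "('e \<Rightarrow> 'k) set \<Rightarrow> bool" where
  "face G \<longleftrightarrow> G \<subseteq> BE \<and> (\<forall>p\<in>G. \<forall>q r t. q \<in> BE \<and> r \<in> BE \<and> 0 < t \<and> t < 1 \<and>
     p = (\<lambda>v. of_real t * q v + of_real (1 - t) * r v) \<longrightarrow> q \<in> G \<and> r \<in> G)"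

lemma face_BE: "face BE"
  unfolding face_def by auto

lemma face_subset: "face G \<Longrightarrow> G \<subseteq> BE"
  unfolding face_def by blast

lemma faceD:
  "face G \<Longrightarrow> p \<in> G \<Longrightarrow> q \<in> BE \<Longrightarrow> r \<in> BE \<Longrightarrow> 0 < t \<Longrightarrow> t < 1 \<Longrightarrow>
    p = (\<lambda>v. of_real t * q v + of_real (1 - t) * r v) \<Longrightarrow> q \<in> G \<and> r \<in> G"
  unfolding face_def by blast

lemma face_Inter: "(\<And>G. G \<in> C \<Longrightarrow> face G) \<Longrightarrow> C \<noteq> {} \<Longrightarrow> face (\<Inter>C)"
  unfolding face_def by blast

lemma closed_BE: "closed BE"
proof -
  have "BE = {p. \<forall>v w. p (v + w) = p v + p w} \<inter> {p. \<forall>c v. p (sm c v) = c * p v} \<inter>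
      {p. \<forall>v. norm (p v) \<le> norm v}"
    by (auto simp: BE_iff)
  also have "closed \<dots>"
    by (intro closed_Int closed_Collect_all closed_Collect_eq closed_Collect_le continuous_intros
        continuous_on_product_coordinates)
  finally show ?thesis .
qed

text \<open>Banach--Alaoglu in the topology of pointwise convergence, via Tychonoff.\<close>
lemma compact_BE: "compact BE"
proof -
  have "compact (PiE UNIV (\<lambda>v::'e. cball (0::'k) (norm v)))"
    using compactin_PiE[of "\<lambda>_. euclidean" UNIV "\<lambda>v::'e. cball (0::'k) (norm v)"]
    by (simp add: euclidean_product_topology)
  moreover have "BE \<subseteq> PiE UNIV (\<lambda>v::'e. cball (0::'k) (norm v))"
    by (auto simp: BE_iff)
  ultimately show ?thesis
    using compact_Int_closed[OF _ closed_BE] by (metis inf.absorb2)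
qed

lemma continuous_on_re_eval: "continuous_on A (\<lambda>p::'e \<Rightarrow> 'k. re (p w))"
  using bounded_linear.continuous_on[OF bounded_linear_re, of A "\<lambda>p. p w"]
  by (auto intro: continuous_on_subset continuous_on_product_coordinates)

lemma face_argmax:
  assumes G: "face G" "closed G" "G \<noteq> {}"
  obtains M where "\<forall>p\<in>G. re (p w) \<le> M" "{p\<in>G. re (p w) = M} \<noteq> {}"
    "closed {p\<in>G. re (p w) = M}" "face {p\<in>G. re (p w) = M}"
proof -
  have "compact G"
    using compact_Int_closed[OF compact_BE G(2)] face_subset[OF G(1)] by (simp add: inf.absorb2)
  then obtain p0 where p0: "p0 \<in> G" "\<And>p. p \<in> G \<Longrightarrow> re (p w) \<le> re (p0 w)"
    using continuous_attains_sup[OF _ G(3) continuous_on_re_eval] by blast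
  define M where "M = re (p0 w)"
  have "closed {p\<in>G. re (p w) = M}"
    using closed_Collect_eq[OF continuous_on_re_eval continuous_on_const] G(2)
    by (simp add: Collect_conj_eq closed_Int Collect_mem_eq)
  moreover have "face {p\<in>G. re (p w) = M}"
    unfolding face_def
  proof (intro conjI ballI allI impI)
    show "{p\<in>G. re (p w) = M} \<subseteq> BE" using face_subset[OF G(1)] by auto
    fix p q r and t :: real
    assume p: "p \<in> {p\<in>G. re (p w) = M}"
      and h: "q \<in> BE \<and> r \<in> BE \<and> 0 < t \<and> t < 1 \<and> p = (\<lambda>v. of_real t * q v + of_real (1 - t) * r v)"
    then have qr: "q \<in> G" "r \<in> G" using faceD[OF G(1), of p q r t] by auto
    have "M = t * re (q w) + (1 - t) * re (r w)"
      using p h re_convex_combination by auto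
    then have "t * (M - re (q w)) + (1 - t) * (M - re (r w)) = 0"
      by (simp add: algebra_simps)
    moreover have "0 \<le> t * (M - re (q w))" "0 \<le> (1 - t) * (M - re (r w))"
      using qr p0 h M_def by auto
    ultimately have "t * (M - re (q w)) = 0" "(1 - t) * (M - re (r w)) = 0"
      by linarith+
    then have "re (q w) = M \<and> re (r w) = M" using h by simp
    then show "q \<in> {p\<in>G. re (p w) = M}" "r \<in> {p\<in>G. re (p w) = M}" using qr by auto
  qed
  ultimately show ?thesis using that p0 M_def by blast
qed

lemma exists_minimal_closed_face:
  assumes "face G" "closed G" "G \<noteq> {}"
  obtains m where "face m" "closed m" "m \<noteq> {}" "m \<subseteq> G"
    "\<And>H. face H \<Longrightarrow> closed H \<Longrightarrow> H \<noteq> {} \<Longrightarrow> H \<subseteq> m \<Longrightarrow> H = m"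
proof -
  define A where "A = {H. H \<subseteq> G \<and> H \<noteq> {} \<and> closed H \<and> face H}"
  have "\<exists>m\<in>A. \<forall>H\<in>A. H \<subseteq> m \<longrightarrow> H = m"
  proof (rule Zorn_minimal)
    show "A \<noteq> {}" using assms unfolding A_def by blast
    fix C assume C: "C \<subseteq> A" "C \<noteq> {}" "\<forall>a\<in>C. \<forall>b\<in>C. a \<subseteq> b \<or> b \<subseteq> a"
    have "H \<subseteq> BE" if "H \<in> C" for H
      using that C(1) face_subset by (auto simp: A_def)
    then have "\<Inter>C \<noteq> {}"
      using C by (intro compact_chain_Inter_nonempty[OF compact_BE]) (auto simp: A_def)
    moreover have "\<Inter>C \<subseteq> G"
      using C(1,2) unfolding A_def by blast
    ultimately have "\<Inter>C \<in> A"
      using C(1,2) by (auto simp: A_def intro!: face_Inter)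
    then show "\<exists>l\<in>A. \<forall>a\<in>C. l \<subseteq> a" by blast
  qed
  then obtain m where m: "m \<in> A" and minimal: "\<And>H. H \<in> A \<Longrightarrow> H \<subseteq> m \<Longrightarrow> H = m"
    by blast
  show ?thesis
  proof (rule that)
    show "face m" "closed m" "m \<noteq> {}" "m \<subseteq> G" using m unfolding A_def by auto
    fix H assume "face H" "closed H" "H \<noteq> {}" "H \<subseteq> m"
    then show "H = m" using m by (intro minimal) (auto simp: A_def)
  qed
qed

text \<open>On a minimal closed face every \<open>p \<mapsto> re (p w)\<close> is constant, by \<open>face_argmax\<close>.\<close>
lemma minimal_closed_face_trivial:
  assumes m: "face m" "closed m" "m \<noteq> {}"
    and minimal: "\<And>H. face H \<Longrightarrow> closed H \<Longrightarrow> H \<noteq> {} \<Longrightarrow> H \<subseteq> m \<Longrightarrow> H = m"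
    and "p \<in> m" "p' \<in> m"
  shows "p = p'"
proof (rule BE_eqI)
  show "p \<in> BE" "p' \<in> BE" using \<open>p \<in> m\<close> \<open>p' \<in> m\<close> face_subset[OF m(1)] by auto
  fix w
  obtain M where "{p\<in>m. re (p w) = M} \<noteq> {}" "closed {p\<in>m. re (p w) = M}" "face {p\<in>m. re (p w) = M}"
    by (rule face_argmax[OF m])
  then have "{p\<in>m. re (p w) = M} = m"
    by (intro minimal) auto
  then show "re (p w) = re (p' w)"
    using \<open>p \<in> m\<close> \<open>p' \<in> m\<close> by (metis (mono_tags, lifting) mem_Collect_eq)
qed

lemma ExtE_if_trivial_face:
  assumes m: "face m" "q \<in> m" and trivial: "\<And>p p'. p \<in> m \<Longrightarrow> p' \<in> m \<Longrightarrow> p = p'"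
  shows "q \<in> ExtE"
  unfolding Ext_def
proof (intro CollectI conjI allI impI)
  show "q \<in> BE" using m face_subset by blast
  fix q1 q2 and t :: real
  assume "q1 \<in> BE \<and> q2 \<in> BE \<and> 0 < t \<and> t < 1 \<and> q = (\<lambda>v. of_real t * q1 v + of_real (1 - t) * q2 v)"
  then have "q1 \<in> m \<and> q2 \<in> m" using faceD[OF m, of q1 q2 t] by simp
  then show "q1 = q2" using trivial by simp
qed

lemma face_contains_ExtE:
  assumes "face G" "closed G" "G \<noteq> {}"
  shows "\<exists>q\<in>G. q \<in> ExtE"
proof -
  obtain m where m: "face m" "closed m" "m \<noteq> {}" "m \<subseteq> G"
    and minimal: "\<And>H. face H \<Longrightarrow> closed H \<Longrightarrow> H \<noteq> {} \<Longrightarrow> H \<subseteq> m \<Longrightarrow> H = m"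
    using exists_minimal_closed_face[OF assms] by blast
  obtain q where "q \<in> m" using m(3) by blast
  then have "q \<in> ExtE"
    using minimal_closed_face_trivial[OF m(1-3) minimal] by (intro ExtE_if_trivial_face[OF m(1)])
  then show ?thesis using \<open>q \<in> m\<close> m(4) by blast
qed

lemma ExtE_separates_points:
  assumes "v \<noteq> 0"
  shows "\<exists>q\<in>ExtE. q v \<noteq> 0"
proof -
  obtain p where p: "p \<in> BE" "p v = of_real (norm v)" using norming[of v] by blast
  then have "BE \<noteq> {}" by blast
  then obtain M where M: "\<forall>p\<in>BE. re (p v) \<le> M" "{p\<in>BE. re (p v) = M} \<noteq> {}"
    "closed {p\<in>BE. re (p v) = M}" "face {p\<in>BE. re (p v) = M}"
    by (rule face_argmax[OF face_BE closed_BE])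
  have "re (p v) \<le> M" using M(1) p(1) by blast
  then have "norm v \<le> M" using p(2) by (simp add: re_of_real)
  moreover have "0 < norm v" using assms by simp
  ultimately have "0 < M" by linarith
  obtain q where "q \<in> ExtE" "q \<in> BE" "re (q v) = M"
    using face_contains_ExtE[OF M(4,3,2)] by blast
  then show ?thesis using \<open>0 < M\<close> re_zero by (intro bexI[of _ q]) auto
qed

lemma ExtE_nonzero:
  assumes "q \<in> ExtE" "(e :: 'e) \<noteq> 0"
  shows "q \<noteq> (\<lambda>v. 0)"
proof
  assume q0: "q = (\<lambda>v. 0)"
  obtain p where p: "p \<in> BE" "p e = of_real (norm e)" using norming by blast
  have "(\<lambda>v. - p v) \<in> BE" using p(1) by (simp add: BE_iff)
  moreover have "q = (\<lambda>v. of_real (1/2) * p v + of_real (1 - 1/2) * - p v)"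
    using q0 by (simp add: fun_eq_iff)
  ultimately have "p = (\<lambda>v. - p v)"
    using ExtE_D[OF assms(1) p(1), of _ "1/2"] by simp
  then have "re (p e) = re (0 - p e)" by (metis diff_0)
  then have "norm e = - norm e" using p(2) by (simp only: re_diff re_zero re_of_real)
  then show False using assms(2) by simp
qed

lemma norm_le_if_re_le:
  assumes "p \<in> BE" and bound: "\<And>e. norm e \<le> 1 \<Longrightarrow> re (p e) \<le> s"
  shows "norm (p v) \<le> s * norm v"
proof (cases "v = 0")
  case True
  then show ?thesis using BE_zero[OF assms(1)] by simp
next
  case False
  obtain l where l: "norm l = 1" "l * p v = of_real (norm (p v))"
    using exists_unit_mult_eq_norm by blast
  define e where "e = sm (of_real (1 / norm v) * l) v"
  have "norm e \<le> 1" using False l(1) by (simp add: e_def norm_sm norm_mult norm_divide)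
  moreover have "p e = of_real (norm (p v) / norm v)"
    using l(2) BE_sm[OF assms(1)] by (simp add: e_def divide_inverse mult.assoc)
  then have "re (p e) = norm (p v) / norm v" by (simp only: re_of_real)
  ultimately have "norm (p v) / norm v \<le> s" using bound[of e] by simp
  then show ?thesis using False by (simp add: pos_divide_le_eq)
qed

lemma ExtE_almost_norming:
  assumes q: "q \<in> ExtE" and "(e0 :: 'e) \<noteq> 0" "0 < \<eta>"
  shows "\<exists>e. norm e \<le> 1 \<and> 1 - \<eta> < re (q e)"
proof (rule ccontr)
  assume contra: "\<not> ?thesis"
  define s where "s = 1 - min \<eta> (1/2)"
  have s: "0 < s" "s < 1" using \<open>0 < \<eta>\<close> by (auto simp: s_def)
  have bound: "norm (q v) \<le> s * norm v" for v
    using contra by (intro norm_le_if_re_le ExtE_BE[OF q]) (auto simp: s_def not_less)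
  \<comment> \<open>\<open>q = s (q / s) + (1 - s) 0\<close> with both \<open>q / s\<close> and \<open>0\<close> in the dual ball\<close>
  have qs: "(\<lambda>v. q v / of_real s) \<in> BE"
    unfolding BE_iff
  proof (intro conjI allI)
    fix v w c
    show "q (v + w) / of_real s = q v / of_real s + q w / of_real s"
      using BE_add[OF ExtE_BE[OF q]] by (simp add: add_divide_distrib)
    show "q (sm c v) / of_real s = c * (q v / of_real s)"
      using BE_sm[OF ExtE_BE[OF q]] by simp
    show "norm (q v / of_real s) \<le> norm v"
      using bound[of v] s(1) by (simp add: norm_divide pos_divide_le_eq mult.commute)
  qed
  have zero: "(\<lambda>v. 0) \<in> BE" by (simp add: BE_iff)
  have "q = (\<lambda>v. of_real s * (q v / of_real s) + of_real (1 - s) * 0)"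
    using s by simp
  then have "(\<lambda>v. q v / of_real s) = (\<lambda>v. 0)"
    using ExtE_D[OF q qs zero s] by simp
  then have "q = (\<lambda>v. 0)" using s by (simp add: fun_eq_iff)
  then show False using ExtE_nonzero[OF q \<open>e0 \<noteq> 0\<close>] by blast
qed

lemma exists_coordinate_functional:
  assumes "(e0 :: 'e) \<noteq> 0"
  obtains L :: "'e \<Rightarrow> 'k" where "bounded_linear L" "\<And>c. L (sm c e0) = c"
proof -
  obtain p where p: "p \<in> BE" "p e0 = of_real (norm e0)" using norming by blast
  have "bounded_linear (\<lambda>v. p v / of_real (norm e0))"
    using bounded_linear_compose[OF bounded_linear_divide bounded_linear_BE[OF p(1)]] .
  moreover have "p (sm c e0) / of_real (norm e0) = c" for c
    using BE_sm[OF p(1)] p(2) assms by simp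
  ultimately show ?thesis using that by blast
qed

lemma bounded_linear_sm: "bounded_linear (sm c)"
proof (rule bounded_linear_intro[where K = "norm c"])
  show "sm c (r *\<^sub>R x) = r *\<^sub>R sm c x" for r x
    by (metis sm_mult sm_of_real mult.commute)
qed (auto simp: sm_add_right norm_sm)

end

section \<open>Extreme functionals of function spaces\<close>

definition cutoff :: "real \<Rightarrow> ('a \<Rightarrow> 'e::real_normed_vector) \<Rightarrow> 'a \<Rightarrow> real" where
  "cutoff \<epsilon> g y = max 0 (1 - norm (g y) / \<epsilon>)"

lemma cutoff_nonneg: "0 \<le> cutoff \<epsilon> g y"
  and cutoff_le_one: "0 < \<epsilon> \<Longrightarrow> cutoff \<epsilon> g y \<le> 1"
  and cutoff_zero: "g y = 0 \<Longrightarrow> cutoff \<epsilon> g y = 1"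
  by (auto simp: cutoff_def)

lemma cutoff_mult_norm_le:
  assumes "0 < \<epsilon>" shows "cutoff \<epsilon> g y * norm (g y) \<le> \<epsilon>"
proof (cases "norm (g y) < \<epsilon>")
  case True
  then show ?thesis
    using mult_right_mono[OF cutoff_le_one[OF assms], of "norm (g y)" g y] by simp
next
  case False
  then have "cutoff \<epsilon> g y = 0" using assms by (simp add: cutoff_def field_simps)
  then show ?thesis using assms by simp
qed

text \<open>The truncations \<open>cutoff \<epsilon> g \<cdot> f\<close> play the role of Urysohn functions: they are all
  that is needed of complete regularity, or of the metric, to localise functionals at a point.\<close>
locale function_space = normed_space_over re sm
  for re :: "'k::{real_normed_field,heine_borel} \<Rightarrow> real" and sm :: "'k \<Rightarrow> 'e::real_normed_vector \<Rightarrow> 'e" +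
  fixes S :: "('a \<Rightarrow> 'e) set"
  assumes S_const: "(\<lambda>y. e) \<in> S"
    and S_add: "f \<in> S \<Longrightarrow> g \<in> S \<Longrightarrow> (\<lambda>y. f y + g y) \<in> S"
    and S_sm: "f \<in> S \<Longrightarrow> (\<lambda>y. sm c (f y)) \<in> S"
    and S_cutoff: "f \<in> S \<Longrightarrow> g \<in> S \<Longrightarrow> 0 < \<epsilon> \<Longrightarrow> (\<lambda>y. cutoff \<epsilon> g y *\<^sub>R f y) \<in> S"
    and S_bounded: "f \<in> S \<Longrightarrow> bounded (range f)"
begin

abbreviation "BS \<equiv> dual_ball S supnorm (fsm sm)"
abbreviation "ExtS \<equiv> Ext S supnorm (fsm sm)"

lemma S_diff: "f \<in> S \<Longrightarrow> g \<in> S \<Longrightarrow> (\<lambda>y. f y - g y) \<in> S"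
  using S_add[OF _ S_sm[of g "- 1"]] by (simp add: sm_minus_one)

lemma norm_le_supnorm: "f \<in> S \<Longrightarrow> norm (f y) \<le> supnorm f"
  unfolding supnorm_def using S_bounded
  by (intro cSUP_upper) (auto simp: bounded_iff bdd_above_def)

lemma supnorm_least: "(\<And>y. norm (f y) \<le> C) \<Longrightarrow> supnorm f \<le> C"
  unfolding supnorm_def by (intro cSUP_least) auto

lemma supnorm_const: "supnorm (\<lambda>y::'a. e) = norm e"
  unfolding supnorm_def by simp

lemma BS_add: "p \<in> BS \<Longrightarrow> f \<in> S \<Longrightarrow> g \<in> S \<Longrightarrow> p (\<lambda>y. f y + g y) = p f + p g"
  unfolding dual_ball_def by (simp add: plus_fun_def)

lemma BS_sm: "p \<in> BS \<Longrightarrow> f \<in> S \<Longrightarrow> p (\<lambda>y. sm c (f y)) = c * p f"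
  unfolding dual_ball_def by (simp add: fsm_def)

lemma BS_norm: "p \<in> BS \<Longrightarrow> f \<in> S \<Longrightarrow> norm (p f) \<le> supnorm f"
  and BS_outside: "p \<in> BS \<Longrightarrow> f \<notin> S \<Longrightarrow> p f = 0"
  unfolding dual_ball_def by simp_all

lemma re_BS_le: "p \<in> BS \<Longrightarrow> f \<in> S \<Longrightarrow> supnorm f \<le> 1 \<Longrightarrow> re (p f) \<le> 1"
  using re_le_norm[of "p f"] BS_norm[of p f] by linarith

definition eval_functional :: "('e \<Rightarrow> 'k) \<Rightarrow> 'a \<Rightarrow> ('a \<Rightarrow> 'e) \<Rightarrow> 'k" where
  "eval_functional q x f = (if f \<in> S then q (f x) else 0)"

lemma eval_functional_BS:
  assumes "q \<in> BE" shows "eval_functional q x \<in> BS"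
  unfolding dual_ball_def
proof (intro CollectI conjI ballI allI impI)
  fix f g c assume "f \<in> S" "g \<in> S"
  show "eval_functional q x (f + g) = eval_functional q x f + eval_functional q x g"
    using S_add[OF \<open>f \<in> S\<close> \<open>g \<in> S\<close>] BE_add[OF assms]
    by (simp add: eval_functional_def plus_fun_def \<open>f \<in> S\<close> \<open>g \<in> S\<close>)
  show "eval_functional q x (fsm sm c f) = c * eval_functional q x f"
    using S_sm[OF \<open>f \<in> S\<close>] BE_sm[OF assms] by (simp add: eval_functional_def fsm_def \<open>f \<in> S\<close>)
  show "norm (eval_functional q x f) \<le> supnorm f"
    using BE_norm[OF assms, of "f x"] norm_le_supnorm[OF \<open>f \<in> S\<close>, of x]
    by (simp add: eval_functional_def \<open>f \<in> S\<close>)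
qed (simp add: eval_functional_def)

lemma BS_restrict_const:
  assumes "p \<in> BS" shows "(\<lambda>e. p (\<lambda>y. e)) \<in> BE"
  unfolding BE_iff
  using BS_add[OF assms S_const S_const] BS_sm[OF assms S_const] BS_norm[OF assms S_const]
  by (simp add: supnorm_const)

lemma BS_localised:
  assumes "p \<in> BS" "f \<in> S" and local: "\<And>g. g \<in> S \<Longrightarrow> g x = 0 \<Longrightarrow> p g = 0"
  shows "p f = p (\<lambda>y. f x)"
proof -
  have "(\<lambda>y. f y - f x) \<in> S" using S_diff[OF assms(2) S_const] .
  moreover have "f = (\<lambda>y. (f y - f x) + f x)" by simp
  ultimately have "p f = p (\<lambda>y. f y - f x) + p (\<lambda>y. f x)"
    using BS_add[OF assms(1) _ S_const, of "\<lambda>y. f y - f x" "f x"] by simp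
  then show ?thesis using local[OF \<open>(\<lambda>y. f y - f x) \<in> S\<close>] by simp
qed

lemma eval_functional_const: "eval_functional q x (\<lambda>y. e) = q e"
  by (simp add: eval_functional_def S_const)

text \<open>If \<open>q \<circ> \<delta>\<^sub>x = t \<phi> + (1 - t) \<psi>\<close> with \<open>q\<close> extreme, then \<open>\<phi>\<close> kills every \<open>w\<close> with
  \<open>\<parallel>w\<parallel> \<le> 1 - u\<close>, where \<open>u\<close> is a bump at \<open>x\<close>: otherwise a suitable rotation of \<open>w\<close> added to
  \<open>u e\<close> stays in the unit ball and forces \<open>re (q e) \<le> 1 - t \<parallel>\<phi> w\<parallel>\<close> for all \<open>\<parallel>e\<parallel> \<le> 1\<close>,
  contradicting that extreme functionals have norm one.\<close>
lemma convex_component_annihilates: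
  assumes q: "q \<in> ExtE" and "(e0 :: 'e) \<noteq> 0"
    and \<phi>: "\<phi> \<in> BS" and \<psi>: "\<psi> \<in> BS" and t: "0 < t" "t < 1"
    and decomp: "eval_functional q x = (\<lambda>f. of_real t * \<phi> f + of_real (1 - t) * \<psi> f)"
    and u: "\<And>y. 0 \<le> u y" "\<And>y. u y \<le> 1" "u x = 1" "\<And>e. (\<lambda>y. u y *\<^sub>R e) \<in> S"
    and w: "w \<in> S" "\<And>y. norm (w y) \<le> 1 - u y"
  shows "\<phi> w = 0"
proof (rule ccontr)
  assume "\<phi> w \<noteq> 0"
  obtain l where l: "norm l = 1" "l * \<phi> w = of_real (norm (\<phi> w))"
    using exists_unit_mult_eq_norm by blast
  obtain e where e: "norm e \<le> 1" "1 - t * norm (\<phi> w) < re (q e)"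
    using ExtE_almost_norming[OF q \<open>e0 \<noteq> 0\<close>, of "t * norm (\<phi> w)"] t \<open>\<phi> w \<noteq> 0\<close> by auto
  define ue where "ue = (\<lambda>y. u y *\<^sub>R e)"
  have ue: "ue \<in> S" "\<And>y. norm (ue y) \<le> u y"
    using u(1,4) e(1) by (auto simp: ue_def mult_left_le)
  have "supnorm (\<lambda>y. ue y + sm l (w y)) \<le> 1"
  proof (rule supnorm_least)
    fix y
    have "norm (ue y + sm l (w y)) \<le> u y + (1 - u y)"
      using norm_triangle_ineq[of "ue y" "sm l (w y)"] ue(2)[of y] w(2)[of y] l(1) by (simp add: norm_sm)
    then show "norm (ue y + sm l (w y)) \<le> 1" by simp
  qed
  then have "re (\<phi> (\<lambda>y. ue y + sm l (w y))) \<le> 1"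
    using ue(1) w(1) by (intro re_BS_le[OF \<phi>] S_add S_sm)
  moreover have "\<phi> (\<lambda>y. ue y + sm l (w y)) = \<phi> ue + of_real (norm (\<phi> w))"
    using BS_add[OF \<phi> ue(1) S_sm[OF w(1)]] BS_sm[OF \<phi> w(1)] l(2) by simp
  ultimately have \<phi>_ue: "re (\<phi> ue) \<le> 1 - norm (\<phi> w)"
    by (simp add: re_add re_of_real)
  have \<psi>_ue: "re (\<psi> ue) \<le> 1"
    using ue by (intro re_BS_le[OF \<psi>] supnorm_least order_trans[OF _ u(2)])
  have "eval_functional q x ue = q e"
    using ue(1) u(3) by (simp add: eval_functional_def ue_def)
  then have "q e = of_real t * \<phi> ue + of_real (1 - t) * \<psi> ue"
    using fun_cong[OF decomp, of ue] by simp
  then have "re (q e) = t * re (\<phi> ue) + (1 - t) * re (\<psi> ue)"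
    by (simp only: re_convex_combination)
  also have "\<dots> \<le> t * (1 - norm (\<phi> w)) + (1 - t) * 1"
    using \<phi>_ue \<psi>_ue t by (intro add_mono mult_left_mono) auto
  finally show False using e(2) by (simp add: algebra_simps)
qed

lemma convex_component_local:
  assumes q: "q \<in> ExtE" and e0: "(e0 :: 'e) \<noteq> 0"
    and \<phi>: "\<phi> \<in> BS" and \<psi>: "\<psi> \<in> BS" and t: "0 < t" "t < 1"
    and decomp: "eval_functional q x = (\<lambda>f. of_real t * \<phi> f + of_real (1 - t) * \<psi> f)"
    and g: "g \<in> S" "g x = 0"
  shows "\<phi> g = 0"
proof -
  have "norm (\<phi> g) \<le> 0 + \<epsilon>" if "0 < \<epsilon>" for \<epsilon>
  proof -
    define u where "u = cutoff \<epsilon> g"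
    define c where "c = supnorm g + 1"
    have "0 < c" unfolding c_def using norm_le_supnorm[OF g(1), of x] norm_ge_zero[of "g x"] by linarith
    have ug: "(\<lambda>y. u y *\<^sub>R g y) \<in> S" "supnorm (\<lambda>y. u y *\<^sub>R g y) \<le> \<epsilon>"
      using S_cutoff[OF g(1) g(1) \<open>0 < \<epsilon>\<close>] cutoff_mult_norm_le[OF \<open>0 < \<epsilon>\<close>]
      by (auto simp: u_def cutoff_nonneg intro!: supnorm_least)
    define w where "w = (\<lambda>y. sm (of_real (1 / c)) (g y - u y *\<^sub>R g y))"
    have "w \<in> S" unfolding w_def using S_sm[OF S_diff[OF g(1) ug(1)]] .
    moreover have "norm (w y) \<le> 1 - u y" for y
    proof -
      have "norm (w y) = (1 - u y) * norm (g y) / c"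
        using cutoff_le_one[OF \<open>0 < \<epsilon>\<close>, of g y] \<open>0 < c\<close>
        by (simp add: w_def u_def norm_sm norm_divide scaleR_diff_left[of 1, simplified, symmetric])
      also have "\<dots> \<le> (1 - u y) * c / c"
        using norm_le_supnorm[OF g(1), of y] cutoff_le_one[OF \<open>0 < \<epsilon>\<close>, of g y] \<open>0 < c\<close>
        by (intro divide_right_mono mult_left_mono) (auto simp: u_def c_def)
      finally show ?thesis using \<open>0 < c\<close> by simp
    qed
    ultimately have "\<phi> w = 0"
      using S_cutoff[OF S_const g(1) \<open>0 < \<epsilon>\<close>] cutoff_nonneg cutoff_le_one[OF \<open>0 < \<epsilon>\<close>] cutoff_zero[of g x]
      by (intro convex_component_annihilates[OF q e0 \<phi> \<psi> t decomp, of u]) (auto simp: u_def g(2))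
    then have "\<phi> (\<lambda>y. g y - u y *\<^sub>R g y) = 0"
      using BS_sm[OF \<phi> S_diff[OF g(1) ug(1)], of "of_real (1 / c)"] \<open>0 < c\<close> by (simp add: w_def)
    then have "\<phi> g = \<phi> (\<lambda>y. u y *\<^sub>R g y)"
      using BS_add[OF \<phi> S_diff[OF g(1) ug(1)] ug(1)] by simp
    then show ?thesis using BS_norm[OF \<phi> ug(1)] ug(2) by simp
  qed
  then show ?thesis using field_le_epsilon[of "norm (\<phi> g)" 0] by simp
qed

theorem eval_functional_ExtS:
  assumes q: "q \<in> ExtE" and e0: "(e0 :: 'e) \<noteq> 0"
  shows "eval_functional q x \<in> ExtS"
  unfolding Ext_def
proof (intro CollectI conjI allI impI)
  show "eval_functional q x \<in> BS" using eval_functional_BS[OF ExtE_BE[OF q]] .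
  fix \<phi> \<psi> and t :: real
  assume "\<phi> \<in> BS \<and> \<psi> \<in> BS \<and> 0 < t \<and> t < 1 \<and>
    eval_functional q x = (\<lambda>f. of_real t * \<phi> f + of_real (1 - t) * \<psi> f)"
  then have \<phi>: "\<phi> \<in> BS" and \<psi>: "\<psi> \<in> BS" and t: "0 < t" "t < 1"
    and decomp: "eval_functional q x = (\<lambda>f. of_real t * \<phi> f + of_real (1 - t) * \<psi> f)"
    by auto
  have decomp': "eval_functional q x = (\<lambda>f. of_real (1 - t) * \<psi> f + of_real (1 - (1 - t)) * \<phi> f)"
    unfolding decomp by (auto simp: fun_eq_iff)
  have local: "\<phi> f = \<phi> (\<lambda>y. f x)" "\<psi> f = \<psi> (\<lambda>y. f x)" if "f \<in> S" for f
    using BS_localised[OF \<phi> that] BS_localised[OF \<psi> that] t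
      convex_component_local[OF q e0 \<phi> \<psi> t decomp] convex_component_local[OF q e0 \<psi> \<phi> _ _ decomp']
    by auto
  have "q e = of_real t * \<phi> (\<lambda>y. e) + of_real (1 - t) * \<psi> (\<lambda>y. e)" for e
    using fun_cong[OF decomp, of "\<lambda>y. e"] unfolding eval_functional_const .
  then have "q = (\<lambda>e. of_real t * \<phi> (\<lambda>y. e) + of_real (1 - t) * \<psi> (\<lambda>y. e))" ..
  then have "(\<lambda>e. \<phi> (\<lambda>y. e)) = (\<lambda>e. \<psi> (\<lambda>y. e))"
    using ExtE_D[OF q BS_restrict_const[OF \<phi>] BS_restrict_const[OF \<psi>] t] by simp
  then show "\<phi> = \<psi>"
    using local BS_outside[OF \<phi>] BS_outside[OF \<psi>] by (metis ext)
qed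

section \<open>Centralizers of function spaces\<close>

lemma multiplier_withD:
  assumes "multiplier_with S supnorm (fsm sm) T a"
  shows "f \<in> S \<Longrightarrow> T f \<in> S"
    and "f \<in> S \<Longrightarrow> g \<in> S \<Longrightarrow> T (\<lambda>y. f y + g y) = (\<lambda>y. T f y + T g y)"
    and "f \<in> S \<Longrightarrow> T (\<lambda>y. sm c (f y)) = (\<lambda>y. sm c (T f y))"
    and "\<exists>C. \<forall>f\<in>S. supnorm (T f) \<le> C * supnorm f"
    and "p \<in> ExtS \<Longrightarrow> f \<in> S \<Longrightarrow> p (T f) = a p * p f"
  using assms unfolding multiplier_with_def bounded_op_def by (auto simp: plus_fun_def fsm_def)

text \<open>The slice of a multiplier at \<open>x\<close> is a multiplier of \<open>E\<close>, because \<open>q \<circ> \<delta>\<^sub>x\<close> is extreme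
  whenever \<open>q\<close> is.\<close>
lemma multiplier_slice:
  assumes T: "multiplier_with S supnorm (fsm sm) T a" and e0: "(e0 :: 'e) \<noteq> 0"
  shows "multiplier_with UNIV norm sm (\<lambda>e. T (\<lambda>y. e) x) (\<lambda>q. a (eval_functional q x))"
  unfolding multiplier_with_def bounded_op_def
proof (intro conjI ballI allI)
  show "T (\<lambda>y. v + w) x = T (\<lambda>y. v) x + T (\<lambda>y. w) x" for v w
    using multiplier_withD(2)[OF T S_const S_const] by metis
  show "T (\<lambda>y. sm c v) x = sm c (T (\<lambda>y. v) x)" for c v
    using multiplier_withD(3)[OF T S_const] by metis
  obtain C where C: "\<And>f. f \<in> S \<Longrightarrow> supnorm (T f) \<le> C * supnorm f"
    using multiplier_withD(4)[OF T] by blast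
  show "\<exists>C. \<forall>v\<in>UNIV. norm (T (\<lambda>y. v) x) \<le> C * norm v"
    using norm_le_supnorm[OF multiplier_withD(1)[OF T S_const]] C[OF S_const] supnorm_const
    by (metis order_trans)
  show "q (T (\<lambda>y. e) x) = a (eval_functional q x) * q e" if "q \<in> ExtE" for q e
    using multiplier_withD(5)[OF T eval_functional_ExtS[OF that e0] S_const]
      multiplier_withD(1)[OF T S_const]
    by (simp add: eval_functional_def S_const)
qed simp

lemma multiplier_vanishes:
  assumes T: "multiplier_with S supnorm (fsm sm) T a" and e0: "(e0 :: 'e) \<noteq> 0"
    and g: "g \<in> S" "g x = 0"
  shows "T g x = 0"
proof (rule ccontr)
  assume "T g x \<noteq> 0"
  then obtain q where q: "q \<in> ExtE" "q (T g x) \<noteq> 0" using ExtE_separates_points by blast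
  have "eval_functional q x (T g) = a (eval_functional q x) * eval_functional q x g"
    using multiplier_withD(5)[OF T eval_functional_ExtS[OF q(1) e0] g(1)] .
  then have "q (T g x) = a (eval_functional q x) * q 0"
    using g multiplier_withD(1)[OF T g(1)] by (simp add: eval_functional_def)
  then show False using q BE_zero[OF ExtE_BE[OF q(1)]] by simp
qed

theorem centralizer_is_multiplication:
  assumes T: "T \<in> centralizer S supnorm (fsm sm) cj" and Z: "Z_one_dim sm cj"
    and e0: "(e0 :: 'e) \<noteq> 0"
  shows "\<exists>h. \<forall>f\<in>S. T f = (\<lambda>x. sm (h x) (f x))"
proof -
  obtain U a where mT: "multiplier_with S supnorm (fsm sm) T a"
    and mU: "multiplier_with S supnorm (fsm sm) U (\<lambda>p. cj (a p))"
    using T unfolding centralizer_def by blast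
  have "(\<lambda>e. T (\<lambda>y. e) x) \<in> centralizer UNIV norm sm cj" for x
    unfolding centralizer_def using multiplier_slice[OF mT e0] multiplier_slice[OF mU e0] by blast
  then obtain h where h: "\<And>x. (\<lambda>e. T (\<lambda>y. e) x) = sm (h x)"
    using Z unfolding Z_one_dim_def by simp metis
  have "T f x = sm (h x) (f x)" if f: "f \<in> S" for f x
  proof -
    have "(\<lambda>y. f y - f x) \<in> S" using S_diff[OF f S_const] .
    moreover have "f = (\<lambda>y. (f y - f x) + f x)" by simp
    ultimately have "T f x = T (\<lambda>y. f y - f x) x + T (\<lambda>y. f x) x"
      using multiplier_withD(2)[OF mT _ S_const] by metis
    also have "T (\<lambda>y. f y - f x) x = 0"
      using multiplier_vanishes[OF mT e0 \<open>(\<lambda>y. f y - f x) \<in> S\<close>] by simp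
    finally show ?thesis using fun_cong[OF h[of x], of "f x"] by simp
  qed
  then show ?thesis by blast
qed

lemma centralizer_factors:
  assumes T: "T \<in> centralizer S supnorm (fsm sm) cj" and Z: "Z_one_dim sm cj"
  obtains g L where "g \<in> S" "bounded_linear L" "\<forall>f\<in>S. T f = (\<lambda>x. sm (L (g x)) (f x))"
proof (cases "\<exists>e0 :: 'e. e0 \<noteq> 0")
  case False
  then have "\<forall>f\<in>S. T f = (\<lambda>x. sm 0 (f x))" by (metis ext)
  then show ?thesis using that[OF S_const bounded_linear_zero] by simp
next
  case True
  then obtain e0 :: 'e where "e0 \<noteq> 0" by blast
  obtain h where h: "\<forall>f\<in>S. T f = (\<lambda>x. sm (h x) (f x))"
    using centralizer_is_multiplication[OF T Z \<open>e0 \<noteq> 0\<close>] by blast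
  obtain L where L: "bounded_linear L" "\<And>c. L (sm c e0) = c"
    using exists_coordinate_functional[OF \<open>e0 \<noteq> 0\<close>] by blast
  have "h x = L (T (\<lambda>y. e0) x)" for x using h S_const L(2) by simp
  moreover have "T (\<lambda>y. e0) \<in> S"
    using T S_const unfolding centralizer_def multiplier_with_def bounded_op_def by blast
  ultimately show ?thesis using that L(1) h by simp
qed

end

section \<open>Bounded and bounded uniformly continuous functions\<close>

lemma bounded_range_iff: "bounded (range (f :: 'a \<Rightarrow> 'b::real_normed_vector)) \<longleftrightarrow> (\<exists>B. \<forall>y. norm (f y) \<le> B)"
  unfolding bounded_iff by auto

lemma norm_cutoff_scaleR_le:
  fixes v :: "'b::real_normed_vector"
  assumes "0 < \<epsilon>" "norm v \<le> B"
  shows "norm (cutoff \<epsilon> g y *\<^sub>R v) \<le> B"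
proof -
  have "cutoff \<epsilon> g y * norm v \<le> 1 * B"
    using assms(2) cutoff_le_one[OF assms(1), of g y] by (intro mult_mono) (simp_all add: cutoff_nonneg)
  then show ?thesis by (simp add: cutoff_nonneg)
qed

lemma bounded_range_cutoff_scaleR:
  fixes f :: "'a \<Rightarrow> 'b::real_normed_vector"
  assumes "bounded (range f)" "0 < \<epsilon>"
  shows "bounded (range (\<lambda>y. cutoff \<epsilon> g y *\<^sub>R f y))"
proof -
  obtain B where B: "\<And>y. norm (f y) \<le> B" using assms(1) unfolding bounded_range_iff by blast
  have "\<forall>y. norm (cutoff \<epsilon> g y *\<^sub>R f y) \<le> B" by (intro allI norm_cutoff_scaleR_le[OF assms(2) B])
  then show ?thesis unfolding bounded_range_iff by (rule exI)
qed

lemma uniformly_continuous_on_cutoff: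
  fixes g :: "'a::metric_space \<Rightarrow> 'b::real_normed_vector"
  assumes "uniformly_continuous_on UNIV g" "0 < \<epsilon>"
  shows "uniformly_continuous_on UNIV (cutoff \<epsilon> g)"
proof -
  define \<rho> :: "'b \<Rightarrow> real" where "\<rho> v = max 0 (1 - norm v / \<epsilon>)" for v
  have "(1 / \<epsilon>)-lipschitz_on UNIV \<rho>"
  proof (rule lipschitz_onI)
    fix v w :: 'b
    have "\<bar>max 0 r - max 0 s\<bar> \<le> \<bar>r - s\<bar>" for r s :: real
      by (simp add: max_def)
    then have "dist (\<rho> v) (\<rho> w) \<le> \<bar>(1 - norm v / \<epsilon>) - (1 - norm w / \<epsilon>)\<bar>"
      by (simp add: \<rho>_def dist_real_def)
    also have "\<dots> = \<bar>norm v - norm w\<bar> / \<epsilon>"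
      using \<open>0 < \<epsilon>\<close> by (simp add: diff_divide_distrib[symmetric] abs_minus_commute)
    also have "\<dots> \<le> dist v w / \<epsilon>"
      using \<open>0 < \<epsilon>\<close> norm_triangle_ineq3[of v w] by (simp add: dist_norm divide_right_mono)
    finally show "dist (\<rho> v) (\<rho> w) \<le> 1 / \<epsilon> * dist v w" by simp
  qed (use \<open>0 < \<epsilon>\<close> in simp)
  then have "uniformly_continuous_on (range g) \<rho>"
    by (rule lipschitz_on_uniformly_continuous[OF lipschitz_on_subset]) simp
  moreover have "cutoff \<epsilon> g = (\<lambda>y. \<rho> (g y))"
    by (simp add: fun_eq_iff cutoff_def \<rho>_def)
  ultimately show ?thesis
    using uniformly_continuous_on_compose[OF assms(1)] by simp
qed

lemma uniformly_continuous_on_scaleR_bounded: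
  fixes u :: "'a::metric_space \<Rightarrow> real" and f :: "'a \<Rightarrow> 'b::real_normed_vector"
  assumes "uniformly_continuous_on UNIV u" "uniformly_continuous_on UNIV f"
    and "\<And>y. \<bar>u y\<bar> \<le> Bu" "\<And>y. norm (f y) \<le> Bf"
  shows "uniformly_continuous_on UNIV (\<lambda>y. u y *\<^sub>R f y)"
  unfolding uniformly_continuous_on_sequentially
proof (intro allI impI)
  fix x y :: "nat \<Rightarrow> 'a"
  assume "(\<forall>n. x n \<in> UNIV) \<and> (\<forall>n. y n \<in> UNIV) \<and> (\<lambda>n. dist (x n) (y n)) \<longlonglongrightarrow> 0"
  then have "(\<lambda>n. dist (u (x n)) (u (y n))) \<longlonglongrightarrow> 0" "(\<lambda>n. dist (f (x n)) (f (y n))) \<longlonglongrightarrow> 0"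
    using assms(1,2) unfolding uniformly_continuous_on_sequentially by simp_all
  from tendsto_add[OF tendsto_mult_right[OF this(1), of Bf] tendsto_mult_left[OF this(2), of Bu]]
  have lim: "(\<lambda>n. dist (u (x n)) (u (y n)) * Bf + Bu * dist (f (x n)) (f (y n))) \<longlonglongrightarrow> 0"
    by simp
  have bound: "dist (u a *\<^sub>R f a) (u b *\<^sub>R f b) \<le> dist (u a) (u b) * Bf + Bu * dist (f a) (f b)" for a b
  proof -
    have "dist (u a *\<^sub>R f a) (u b *\<^sub>R f b) = norm ((u a - u b) *\<^sub>R f a + u b *\<^sub>R (f a - f b))"
      by (simp add: dist_norm algebra_simps)
    also have "\<dots> \<le> \<bar>u a - u b\<bar> * norm (f a) + \<bar>u b\<bar> * norm (f a - f b)"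
      using norm_triangle_ineq[of "(u a - u b) *\<^sub>R f a" "u b *\<^sub>R (f a - f b)"] by simp
    also have "\<dots> \<le> dist (u a) (u b) * Bf + Bu * dist (f a) (f b)"
      using assms(3,4) by (intro add_mono mult_mono') (auto simp: dist_real_def dist_norm)
    finally show ?thesis .
  qed
  show "(\<lambda>n. dist (u (x n) *\<^sub>R f (x n)) (u (y n) *\<^sub>R f (y n))) \<longlonglongrightarrow> 0"
    by (rule Lim_null_comparison[OF always_eventually lim]) (simp add: bound)
qed

lemma Cb_bounded_linear_compose:
  assumes "f \<in> Cb" "bounded_linear L" shows "(\<lambda>y. L (f y)) \<in> Cb"
  using assms bounded_linear.continuous_on[OF assms(2)] bounded_linear_image[of "range f" L]
  by (auto simp: Cb_def image_image)

lemma Cbu_bounded_linear_compose: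
  assumes "f \<in> Cbu" "bounded_linear L" shows "(\<lambda>y. L (f y)) \<in> Cbu"
  using assms bounded_linear.uniformly_continuous_on[OF assms(2)] bounded_linear_image[of "range f" L]
  by (auto simp: Cbu_def image_image)

context normed_space_over
begin

lemma function_space_Cb: "function_space re sm (Cb :: ('x::topological_space \<Rightarrow> 'e) set)"
proof unfold_locales
  fix f g :: "'x \<Rightarrow> 'e" and c and \<epsilon> :: real
  show "(\<lambda>y. e) \<in> Cb" for e :: 'e by (simp add: Cb_def)
  show "f \<in> Cb \<Longrightarrow> bounded (range f)" by (simp add: Cb_def)
  show "f \<in> Cb \<Longrightarrow> g \<in> Cb \<Longrightarrow> (\<lambda>y. f y + g y) \<in> Cb"
    using bounded_plus_comp by (auto simp: Cb_def intro: continuous_on_add)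
  show "f \<in> Cb \<Longrightarrow> (\<lambda>y. sm c (f y)) \<in> Cb"
    using Cb_bounded_linear_compose[OF _ bounded_linear_sm] .
  assume "f \<in> Cb" "g \<in> Cb" "0 < \<epsilon>"
  then have "continuous_on UNIV (cutoff \<epsilon> g)"
    unfolding cutoff_def[abs_def] Cb_def by (intro continuous_intros) auto
  then have "continuous_on UNIV (\<lambda>y. cutoff \<epsilon> g y *\<^sub>R f y)"
    using \<open>f \<in> Cb\<close> unfolding Cb_def by (intro continuous_on_scaleR) auto
  then show "(\<lambda>y. cutoff \<epsilon> g y *\<^sub>R f y) \<in> Cb"
    using \<open>f \<in> Cb\<close> bounded_range_cutoff_scaleR[OF _ \<open>0 < \<epsilon>\<close>, of f] by (simp add: Cb_def)
qed

lemma function_space_Cbu: "function_space re sm (Cbu :: ('x::metric_space \<Rightarrow> 'e) set)"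
proof unfold_locales
  fix f g :: "'x \<Rightarrow> 'e" and c and \<epsilon> :: real
  show "(\<lambda>y. e) \<in> Cbu" for e :: 'e by (simp add: Cbu_def uniformly_continuous_on_const)
  show "f \<in> Cbu \<Longrightarrow> bounded (range f)" by (simp add: Cbu_def)
  show "f \<in> Cbu \<Longrightarrow> g \<in> Cbu \<Longrightarrow> (\<lambda>y. f y + g y) \<in> Cbu"
    using bounded_plus_comp by (auto simp: Cbu_def intro: uniformly_continuous_on_add)
  show "f \<in> Cbu \<Longrightarrow> (\<lambda>y. sm c (f y)) \<in> Cbu"
    using Cbu_bounded_linear_compose[OF _ bounded_linear_sm] .
  assume "f \<in> Cbu" "g \<in> Cbu" "0 < \<epsilon>"
  then obtain B where B: "\<And>y. norm (f y) \<le> B" by (auto simp: Cbu_def bounded_range_iff)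
  have "\<bar>cutoff \<epsilon> g y\<bar> \<le> 1" for y
    by (simp add: cutoff_nonneg cutoff_le_one[OF \<open>0 < \<epsilon>\<close>])
  moreover have "uniformly_continuous_on UNIV (cutoff \<epsilon> g)"
    using \<open>g \<in> Cbu\<close> \<open>0 < \<epsilon>\<close> by (intro uniformly_continuous_on_cutoff) (simp add: Cbu_def)
  ultimately have "uniformly_continuous_on UNIV (\<lambda>y. cutoff \<epsilon> g y *\<^sub>R f y)"
    using \<open>f \<in> Cbu\<close> B unfolding Cbu_def by (intro uniformly_continuous_on_scaleR_bounded) auto
  then show "(\<lambda>y. cutoff \<epsilon> g y *\<^sub>R f y) \<in> Cbu"
    using \<open>f \<in> Cbu\<close> bounded_range_cutoff_scaleR[OF _ \<open>0 < \<epsilon>\<close>, of f] by (simp add: Cbu_def)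
qed

lemma Cb_centralizer:
  assumes "Z_one_dim sm cj" "T \<in> centralizer (Cb :: ('x::topological_space \<Rightarrow> 'e) set) supnorm (fsm sm) cj"
  shows "\<exists>h \<in> (Cb :: ('x \<Rightarrow> 'k) set). \<forall>f\<in>Cb. T f = (\<lambda>x. sm (h x) (f x))"
proof -
  interpret function_space re sm "Cb :: ('x \<Rightarrow> 'e) set" by (rule function_space_Cb)
  obtain g :: "'x \<Rightarrow> 'e" and L :: "'e \<Rightarrow> 'k" where g: "g \<in> Cb" "bounded_linear L" "\<forall>f\<in>Cb. T f = (\<lambda>x. sm (L (g x)) (f x))"
    by (rule centralizer_factors[OF assms(2,1)])
  moreover have "(\<lambda>x. L (g x)) \<in> Cb" using Cb_bounded_linear_compose[OF g(1,2)] .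
  ultimately show ?thesis by (intro bexI[of _ "\<lambda>x. L (g x)"]) simp_all
qed

lemma Cbu_centralizer:
  assumes "Z_one_dim sm cj" "T \<in> centralizer (Cbu :: ('x::metric_space \<Rightarrow> 'e) set) supnorm (fsm sm) cj"
  shows "\<exists>h \<in> (Cbu :: ('x \<Rightarrow> 'k) set). \<forall>f\<in>Cbu. T f = (\<lambda>x. sm (h x) (f x))"
proof -
  interpret function_space re sm "Cbu :: ('x \<Rightarrow> 'e) set" by (rule function_space_Cbu)
  obtain g :: "'x \<Rightarrow> 'e" and L :: "'e \<Rightarrow> 'k" where g: "g \<in> Cbu" "bounded_linear L" "\<forall>f\<in>Cbu. T f = (\<lambda>x. sm (L (g x)) (f x))"
    by (rule centralizer_factors[OF assms(2,1)])
  moreover have "(\<lambda>x. L (g x)) \<in> Cbu" using Cbu_bounded_linear_compose[OF g(1,2)] .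
  ultimately show ?thesis by (intro bexI[of _ "\<lambda>x. L (g x)"]) simp_all
qed

end

section \<open>Real and complex scalars\<close>

lemma scalar_field_real: "scalar_field (\<lambda>x::real. x)"
  by unfold_locales auto

lemma scalar_field_complex: "scalar_field Re"
  by unfold_locales (auto simp: complex_Re_le_cmod)

lemma normed_space_over_real: "normed_space_over (\<lambda>x::real. x) (scaleR :: real \<Rightarrow> 'e::real_normed_vector \<Rightarrow> 'e)"
proof (intro normed_space_over.intro scalar_field_real normed_space_over_axioms.intro)
  fix v :: 'e
  obtain \<rho> where "linear \<rho>" "\<And>w. \<bar>\<rho> w\<bar> \<le> norm w" "\<rho> v = norm v"
    using norming_functional_real[of v] by blast
  then show "\<exists>p\<in>dual_ball UNIV norm scaleR. p v = of_real (norm v)"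
    by (intro bexI[of _ \<rho>]) (auto simp: dual_ball_def linear_add linear_scale)
qed (auto simp: scaleR_add_right)

lemma complex_scaling_decompose:
  assumes "complex_scaling sm"
  shows "sm c w = Re c *\<^sub>R w + Im c *\<^sub>R sm \<i> w"
proof -
  have "c = complex_of_real (Re c) + complex_of_real (Im c) * \<i>" by (simp add: complex_eq_iff)
  then have "sm c w = sm (complex_of_real (Re c) + complex_of_real (Im c) * \<i>) w" by simp
  also have "\<dots> = Re c *\<^sub>R w + Im c *\<^sub>R sm \<i> w"
    using assms unfolding complex_scaling_def by simp
  finally show ?thesis .
qed

text \<open>A real functional \<open>\<rho>\<close> is the real part of the complex-linear functional
  \<open>w \<mapsto> \<rho> w - \<i> \<rho> (\<i> w)\<close>, which has the same norm.\<close>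
lemma complexified_functional_dual_ball:
  assumes sm: "complex_scaling sm" and \<rho>: "linear \<rho>" "\<And>w. \<bar>\<rho> w\<bar> \<le> norm w"
  shows "(\<lambda>w. Complex (\<rho> w) (- \<rho> (sm \<i> w))) \<in> dual_ball UNIV norm sm"
proof -
  define p where "p w = Complex (\<rho> w) (- \<rho> (sm \<i> w))" for w
  have add: "p (v + w) = p v + p w" for v w
    using sm \<rho>(1) by (simp add: p_def complex_scaling_def linear_add complex_eq_iff)
  have mult: "p (sm c w) = c * p w" for c w
  proof -
    have i_c: "sm \<i> (sm c w) = (- Im c) *\<^sub>R w + Re c *\<^sub>R sm \<i> w"
      using sm complex_scaling_decompose[OF sm, of "\<i> * c" w] by (simp add: complex_scaling_def)
    show ?thesis
      unfolding p_def i_c unfolding complex_scaling_decompose[OF sm, of c w] using \<rho>(1)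
      by (simp add: linear_add linear_diff linear_scale complex_eq_iff algebra_simps)
  qed
  have "cmod (p w) \<le> norm w" for w
  proof -
    obtain l where l: "cmod l = 1" "l * p w = complex_of_real (cmod (p w))"
      using exists_unit_mult_eq_norm by blast
    then have "cmod (p w) = \<rho> (sm l w)" using mult[of l w] by (simp add: p_def complex_eq_iff)
    also have "\<dots> \<le> norm (sm l w)" using \<rho>(2)[of "sm l w"] by simp
    also have "\<dots> = norm w" using sm l(1) by (simp add: complex_scaling_def)
    finally show ?thesis .
  qed
  with add mult show ?thesis by (simp add: dual_ball_def p_def[abs_def])
qed

lemma normed_space_over_complex:
  assumes sm: "complex_scaling (sm :: complex \<Rightarrow> 'e::real_normed_vector \<Rightarrow> 'e)"
  shows "normed_space_over Re sm"
proof (intro normed_space_over.intro scalar_field_complex normed_space_over_axioms.intro)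
  fix v :: 'e
  obtain \<rho> where \<rho>: "linear \<rho>" "\<And>w. \<bar>\<rho> w\<bar> \<le> norm w" "\<rho> v = norm v"
    using norming_functional_real[of v] by blast
  define p where "p = (\<lambda>w. Complex (\<rho> w) (- \<rho> (sm \<i> w)))"
  have "p \<in> dual_ball UNIV norm sm"
    unfolding p_def using complexified_functional_dual_ball[OF sm \<rho>(1,2)] .
  then have "cmod (p v) \<le> norm v" by (simp add: dual_ball_def)
  then have "(Re (p v))\<^sup>2 + (Im (p v))\<^sup>2 \<le> (norm v)\<^sup>2"
    unfolding cmod_power2[symmetric] by (simp add: power_mono)
  moreover have "Re (p v) = norm v" using \<rho>(3) by (simp add: p_def)
  ultimately have "(Im (p v))\<^sup>2 \<le> 0" by simp
  then have "p v = complex_of_real (norm v)"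
    using \<open>Re (p v) = norm v\<close> by (simp add: complex_eq_iff)
  with \<open>p \<in> dual_ball UNIV norm sm\<close> show "\<exists>p\<in>dual_ball UNIV norm sm. p v = of_real (norm v)" by blast
qed (use sm in \<open>auto simp: complex_scaling_def\<close>)

theorem lemma3p3:
  shows
  \<comment> \<open>Situation 1, K = R\<close>
  "(completely_regular_space (euclidean :: 'x::topological_space topology) \<and>
     realcompact (euclidean :: 'x topology) \<and>
     infinite_dim_K (scaleR :: real \<Rightarrow> 'e::banach \<Rightarrow> 'e) \<and>
     Z_one_dim (scaleR :: real \<Rightarrow> 'e \<Rightarrow> 'e) id \<longrightarrow>
     (\<forall>T \<in> centralizer (Cb :: ('x \<Rightarrow> 'e) set) supnorm (fsm scaleR) id.
        \<exists>h \<in> (Cb :: ('x \<Rightarrow> real) set). \<forall>f \<in> (Cb :: ('x \<Rightarrow> 'e) set).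
          T f = (\<lambda>x. h x *\<^sub>R f x)))
   \<and>
   \<comment> \<open>Situation 1, K = C\<close>
   (\<forall>sm :: complex \<Rightarrow> 'e \<Rightarrow> 'e.
     complex_scaling sm \<and>
     completely_regular_space (euclidean :: 'x topology) \<and>
     realcompact (euclidean :: 'x topology) \<and>
     infinite_dim_K sm \<and>
     Z_one_dim sm cnj \<longrightarrow>
     (\<forall>T \<in> centralizer (Cb :: ('x \<Rightarrow> 'e) set) supnorm (fsm sm) cnj.
        \<exists>h \<in> (Cb :: ('x \<Rightarrow> complex) set). \<forall>f \<in> (Cb :: ('x \<Rightarrow> 'e) set).
          T f = (\<lambda>x. sm (h x) (f x))))
   \<and>
   \<comment> \<open>Situation 2, K = R\<close>
   (Z_one_dim (scaleR :: real \<Rightarrow> 'e \<Rightarrow> 'e) id \<longrightarrow>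
     (\<forall>T \<in> centralizer (Cbu :: ('y::complete_space \<Rightarrow> 'e) set) supnorm (fsm scaleR) id.
        \<exists>h \<in> (Cbu :: ('y \<Rightarrow> real) set). \<forall>f \<in> (Cbu :: ('y \<Rightarrow> 'e) set).
          T f = (\<lambda>x. h x *\<^sub>R f x)))
   \<and>
   \<comment> \<open>Situation 2, K = C\<close>
   (\<forall>sm :: complex \<Rightarrow> 'e \<Rightarrow> 'e.
     complex_scaling sm \<and> Z_one_dim sm cnj \<longrightarrow>
     (\<forall>T \<in> centralizer (Cbu :: ('y \<Rightarrow> 'e) set) supnorm (fsm sm) cnj.
        \<exists>h \<in> (Cbu :: ('y \<Rightarrow> complex) set). \<forall>f \<in> (Cbu :: ('y \<Rightarrow> 'e) set).
          T f = (\<lambda>x. sm (h x) (f x))))"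
proof -
  have real: "normed_space_over (\<lambda>x::real. x) (scaleR :: real \<Rightarrow> 'e \<Rightarrow> 'e)"
    by (rule normed_space_over_real)
  have complex: "normed_space_over Re sm" if "complex_scaling sm" for sm :: "complex \<Rightarrow> 'e \<Rightarrow> 'e"
    using that by (rule normed_space_over_complex)
  show ?thesis
    using normed_space_over.Cb_centralizer[OF real] normed_space_over.Cbu_centralizer[OF real]
      normed_space_over.Cb_centralizer[OF complex] normed_space_over.Cbu_centralizer[OF complex]
    by blast
qed

end
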